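(* Let $G=(V,E)$ be a finite simple graph. Consider the procedure: set $\mathcal{F}\leftarrow\emptyset$; while $\mathrm{MFF}(G,\mathcal{F})$ is feasible, choose an optimal solution $x$ of $\mathrm{MFF}(G,\mathcal{F})$ and replace $\mathcal{F}$ by $\mathcal{F}\cup\{\{v\in V\colon x_v=1\}\}$; finally return $\mathcal{F}$. Then the returned collection $\mathcal{F}$ is the collection of all minimal forts of $G$.
   Context: $N(u)$ denotes the neighborhood of $u$. A fort of $G$ is a non-empty set $F\subseteq V$ such that no vertex $u\in V\setminus F$ has exactly one neighbor in $F$; it is minimal if no fort of $G$ is a proper subset of it. For a collection $\mathcal{F}$ of subsets of $V$, $\mathrm{MFF}(G,\mathcal{F})$ is the integer program: minimize $\sum_{v\in V}x_v$ subject to $\sum_{v\in V}x_v\geq1$; $x_u-x_v+\sum_{w\in N(u)\setminus\{v\}}x_w\geq0$ for all $v\in V$ and $u\in N(v)$; $\sum_{v\in F}x_v\leq|F|-1$ for all $F\in\mathcal{F}$; $x\in\{0,1\}^V$. *)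

theory Defs
  imports Main
begin

definition simple_graph :: "'a set \<Rightarrow> ('a \<Rightarrow> 'a \<Rightarrow> bool) \<Rightarrow> bool" where
  "simple_graph V E \<longleftrightarrow> finite V \<and> (\<forall>u v. E u v \<longrightarrow> u \<in> V \<and> v \<in> V)
     \<and> (\<forall>u v. E u v \<longrightarrow> E v u) \<and> (\<forall>u. \<not> E u u)"

definition nbhd :: "'a set \<Rightarrow> ('a \<Rightarrow> 'a \<Rightarrow> bool) \<Rightarrow> 'a \<Rightarrow> 'a set" where
  "nbhd V E u = {w \<in> V. E u w}"

definition is_fort :: "'a set \<Rightarrow> ('a \<Rightarrow> 'a \<Rightarrow> bool) \<Rightarrow> 'a set \<Rightarrow> bool" where
  "is_fort V E F \<longleftrightarrow> F \<noteq> {} \<and> F \<subseteq> V \<and>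
     (\<forall>u \<in> V - F. card (nbhd V E u \<inter> F) \<noteq> 1)"

definition is_minimal_fort :: "'a set \<Rightarrow> ('a \<Rightarrow> 'a \<Rightarrow> bool) \<Rightarrow> 'a set \<Rightarrow> bool" where
  "is_minimal_fort V E F \<longleftrightarrow> is_fort V E F \<and> (\<forall>F'. F' \<subset> F \<longrightarrow> \<not> is_fort V E F')"

text \<open>Feasible points of MFF(G, FF): 0/1 vectors indexed by V (values outside V are irrelevant).\<close>
definition mff_feasible :: "'a set \<Rightarrow> ('a \<Rightarrow> 'a \<Rightarrow> bool) \<Rightarrow> 'a set set \<Rightarrow> ('a \<Rightarrow> int) \<Rightarrow> bool" where
  "mff_feasible V E FF x \<longleftrightarrow>
     (\<forall>v \<in> V. x v \<in> {0, 1}) \<and>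
     (\<Sum>v\<in>V. x v) \<ge> 1 \<and>
     (\<forall>v \<in> V. \<forall>u \<in> nbhd V E v. x u - x v + (\<Sum>w \<in> nbhd V E u - {v}. x w) \<ge> 0) \<and>
     (\<forall>F \<in> FF. (\<Sum>v\<in>F. x v) \<le> int (card F) - 1)"

definition mff_is_feasible :: "'a set \<Rightarrow> ('a \<Rightarrow> 'a \<Rightarrow> bool) \<Rightarrow> 'a set set \<Rightarrow> bool" where
  "mff_is_feasible V E FF \<longleftrightarrow> (\<exists>x. mff_feasible V E FF x)"

definition mff_optimal :: "'a set \<Rightarrow> ('a \<Rightarrow> 'a \<Rightarrow> bool) \<Rightarrow> 'a set set \<Rightarrow> ('a \<Rightarrow> int) \<Rightarrow> bool" where
  "mff_optimal V E FF x \<longleftrightarrow> mff_feasible V E FF x \<and>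
     (\<forall>y. mff_feasible V E FF y \<longrightarrow> (\<Sum>v\<in>V. x v) \<le> (\<Sum>v\<in>V. y v))"

definition mff_step :: "'a set \<Rightarrow> ('a \<Rightarrow> 'a \<Rightarrow> bool) \<Rightarrow> 'a set set \<Rightarrow> 'a set set \<Rightarrow> bool" where
  "mff_step V E FF FF' \<longleftrightarrow> mff_is_feasible V E FF \<and>
     (\<exists>x. mff_optimal V E FF x \<and> FF' = insert {v \<in> V. x v = 1} FF)"

end

theory Submission
  imports Defs "HOL-Library.Indicator_Function"
begin

text \<open>The feasible points of MFF(G, FF) are exactly the indicator vectors of forts that contain
  no member of FF, and the objective is the size of the fort. Hence an optimal solution picks a
  smallest fort avoiding FF, which is a minimal fort: a smaller fort inside it would avoid FF as
  well. Each iteration therefore adds a new minimal fort, so the loop stops after at most as many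
  iterations as there are minimal forts. When it stops, every minimal fort lies in FF, since
  otherwise its indicator would be feasible, distinct minimal forts being incomparable.\<close>

lemma no_infinite_psubset_chain:
  assumes "finite M" and "\<forall>n. f n \<subseteq> M"
  shows "\<not> (\<forall>n. f n \<subset> f (Suc n))"
proof
  assume chain: "\<forall>n. f n \<subset> f (Suc n)"
  let ?r = "{(B, A). A \<subset> B \<and> B \<subseteq> M}"
  have "wf ?r"
    by (rule wf_bounded_set[of _ "\<lambda>_. M" id]) (auto simp: assms(1))
  moreover have "\<forall>i. (f (Suc i), f i) \<in> ?r"
    using chain assms(2) by simp
  ultimately show False
    unfolding wf_iff_no_infinite_down_chain by blast
qed

lemma sum_indicator_eq_of_nat_card:
  "finite A \<Longrightarrow> (\<Sum>v\<in>A. indicator S v) = (of_nat (card (A \<inter> S)) :: 'b::semiring_1)"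
  by (simp add: indicator_def)

lemma finite_minimal_forts:
  assumes "simple_graph V E"
  shows "finite {F. is_minimal_fort V E F}"
proof (rule finite_subset)
  show "{F. is_minimal_fort V E F} \<subseteq> Pow V"
    by (auto simp: is_minimal_fort_def is_fort_def)
  show "finite (Pow V)"
    using assms by (simp add: simple_graph_def)
qed

lemma fort_finite:
  "simple_graph V E \<Longrightarrow> is_fort V E F \<Longrightarrow> finite F"
  by (meson finite_subset is_fort_def simple_graph_def)

lemma minimal_fort_subset_eq:
  "is_minimal_fort V E F \<Longrightarrow> is_minimal_fort V E M \<Longrightarrow> F \<subseteq> M \<Longrightarrow> F = M"
  by (auto simp: is_minimal_fort_def)

text \<open>An infinite member would have cardinality 0, making its constraint read 0 \<le> -1.\<close>

lemma mff_feasible_member_finite: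
  assumes "mff_feasible V E FF x" and "F \<in> FF"
  shows "finite F"
proof (rule ccontr)
  assume "infinite F"
  then show False
    using assms by (auto simp: mff_feasible_def)
qed

lemma mff_feasible_objective:
  assumes "finite V" and "mff_feasible V E FF x"
  shows "(\<Sum>v\<in>V. x v) = int (card {v\<in>V. x v = 1})"
proof -
  have "(\<Sum>v\<in>V. x v) = (\<Sum>v\<in>V. of_bool (x v = 1))"
    using assms(2) by (intro sum.cong) (auto simp: mff_feasible_def)
  then show ?thesis
    using assms(1) by (simp add: Collect_conj_eq Int_commute)
qed

lemma mff_feasible_support_not_superset:
  assumes "mff_feasible V E FF x" and "F \<in> FF"
  shows "\<not> F \<subseteq> {v\<in>V. x v = 1}"
proof
  assume "F \<subseteq> {v\<in>V. x v = 1}"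
  then have "(\<Sum>v\<in>F. x v) = int (card F)"
    by (simp add: subset_iff)
  then show False
    using assms by (auto simp: mff_feasible_def)
qed

lemma mff_feasible_support_fort:
  assumes g: "simple_graph V E" and x: "mff_feasible V E FF x"
  shows "is_fort V E {v\<in>V. x v = 1}"
proof -
  let ?S = "{v\<in>V. x v = 1}"
  have x01: "\<forall>v\<in>V. x v \<in> {0, 1}"
    using x by (simp add: mff_feasible_def)
  have "?S \<noteq> {}"
  proof
    assume "?S = {}"
    then have "(\<Sum>v\<in>V. x v) = 0"
      using x01 by (intro sum.neutral) auto
    then show False
      using x by (simp add: mff_feasible_def)
  qed
  moreover have "card (nbhd V E u \<inter> ?S) \<noteq> 1" if u: "u \<in> V - ?S" for u
  proof
    assume "card (nbhd V E u \<inter> ?S) = 1"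
    then obtain v where v: "nbhd V E u \<inter> ?S = {v}"
      by (auto simp: card_Suc_eq)
    then have "v \<in> V" "x v = 1" "E u v"
      by (auto simp: nbhd_def)
    then have "u \<in> nbhd V E v"
      using u g by (auto simp: nbhd_def simple_graph_def)
    with x \<open>v \<in> V\<close> have "x u - x v + (\<Sum>w \<in> nbhd V E u - {v}. x w) \<ge> 0"
      by (simp add: mff_feasible_def)
    moreover have "(\<Sum>w \<in> nbhd V E u - {v}. x w) = 0"
      using v x01 by (intro sum.neutral) (auto simp: nbhd_def)
    moreover have "x u = 0"
      using u x01 by auto
    ultimately show False
      using \<open>x v = 1\<close> by simp
  qed
  ultimately show ?thesis
    by (auto simp: is_fort_def)
qed

lemma mff_feasible_indicator_fort:
  assumes g: "simple_graph V E" and S: "is_fort V E S"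
    and FF: "\<forall>F\<in>FF. finite F \<and> \<not> F \<subseteq> S"
  shows "mff_feasible V E FF (indicator S)"
proof -
  have fin: "finite V"
    using g by (simp add: simple_graph_def)
  have "S \<subseteq> V" and "S \<noteq> {}"
    using S by (auto simp: is_fort_def)
  then have "(\<Sum>v\<in>V. indicator S v :: int) \<ge> 1"
    using fin by (simp add: sum_indicator_eq_of_nat_card Int_absorb1 Suc_le_eq card_gt_0_iff
        finite_subset)
  moreover have "indicator S u - indicator S v + (\<Sum>w \<in> nbhd V E u - {v}. indicator S w) \<ge> (0::int)"
    if v: "v \<in> V" and u: "u \<in> nbhd V E v" for u v
  proof (cases "u \<notin> S \<and> v \<in> S")
    case False
    have "0 \<le> (\<Sum>w \<in> nbhd V E u - {v}. indicator S w :: int)"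
      by (rule sum_nonneg) simp
    with False show ?thesis
      by (cases "u \<in> S"; cases "v \<in> S") simp_all
  next
    case True
    have "u \<in> V" "v \<in> nbhd V E u"
      using u v g by (auto simp: nbhd_def simple_graph_def)
    moreover have "card (nbhd V E u \<inter> S) \<noteq> 1"
      using S True \<open>u \<in> V\<close> by (simp add: is_fort_def)
    ultimately obtain w where w: "w \<in> nbhd V E u - {v}" "w \<in> S"
      using True by (cases "nbhd V E u \<inter> S = {v}") auto
    have "indicator S w \<le> (\<Sum>w \<in> nbhd V E u - {v}. indicator S w :: int)"
      using w fin by (intro member_le_sum) (auto simp: nbhd_def)
    then show ?thesis
      using True w by simp
  qed
  moreover have "(\<Sum>v\<in>F. indicator S v) \<le> int (card F) - 1" if "F \<in> FF" for F
  proof -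
    have "finite F" "F \<inter> S \<subset> F"
      using FF that by auto
    then show ?thesis
      by (simp add: sum_indicator_eq_of_nat_card psubset_card_mono)
  qed
  ultimately show ?thesis
    by (simp add: mff_feasible_def indicator_def)
qed

lemma mff_optimal_support_minimal_fort:
  assumes g: "simple_graph V E" and x: "mff_optimal V E FF x"
  shows "is_minimal_fort V E {v\<in>V. x v = 1}"
  unfolding is_minimal_fort_def
proof (intro conjI allI impI notI)
  let ?S = "{v\<in>V. x v = 1}"
  have fin: "finite V"
    using g by (simp add: simple_graph_def)
  have feas: "mff_feasible V E FF x"
    using x by (simp add: mff_optimal_def)
  then show "is_fort V E ?S"
    by (rule mff_feasible_support_fort[OF g])
  fix S assume "S \<subset> ?S" and "is_fort V E S"
  moreover have "\<forall>F\<in>FF. finite F \<and> \<not> F \<subseteq> S"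
    using \<open>S \<subset> ?S\<close> mff_feasible_member_finite[OF feas]
      mff_feasible_support_not_superset[OF feas] by blast
  ultimately have "mff_feasible V E FF (indicator S)"
    using mff_feasible_indicator_fort[OF g] by blast
  then have "int (card ?S) \<le> (\<Sum>v\<in>V. indicator S v)"
    using x mff_feasible_objective[OF fin feas] by (simp add: mff_optimal_def)
  also have "\<dots> = int (card S)"
    using \<open>is_fort V E S\<close> fin by (simp add: is_fort_def sum_indicator_eq_of_nat_card Int_absorb1)
  also have "\<dots> < int (card ?S)"
    using \<open>S \<subset> ?S\<close> fin psubset_card_mono[of ?S S] by simp
  finally show False
    by simp
qed

lemma mff_step_adds_minimal_fort:
  assumes g: "simple_graph V E"
    and FF: "FF \<subseteq> {F. is_minimal_fort V E F}" and step: "mff_step V E FF FF'"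
  shows "FF' \<subseteq> {F. is_minimal_fort V E F} \<and> FF \<subset> FF'"
proof -
  obtain x where x: "mff_optimal V E FF x" and FF': "FF' = insert {v\<in>V. x v = 1} FF"
    using step by (auto simp: mff_step_def)
  have "{v\<in>V. x v = 1} \<notin> FF"
    using x mff_feasible_support_not_superset by (fastforce simp: mff_optimal_def)
  then show ?thesis
    using FF FF' mff_optimal_support_minimal_fort[OF g x] by auto
qed

lemma minimal_forts_subset_if_mff_infeasible:
  assumes g: "simple_graph V E"
    and FF: "FF \<subseteq> {F. is_minimal_fort V E F}" and infeasible: "\<not> mff_is_feasible V E FF"
  shows "{F. is_minimal_fort V E F} \<subseteq> FF"
proof
  fix M assume "M \<in> {F. is_minimal_fort V E F}"
  then have M: "is_minimal_fort V E M"
    by simp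
  show "M \<in> FF"
  proof (rule ccontr)
    assume "M \<notin> FF"
    have "finite F \<and> \<not> F \<subseteq> M" if "F \<in> FF" for F
    proof
      have F: "is_minimal_fort V E F"
        using FF that by auto
      then show "finite F"
        using fort_finite[OF g] by (simp add: is_minimal_fort_def)
      show "\<not> F \<subseteq> M"
        using minimal_fort_subset_eq[OF F M] \<open>M \<notin> FF\<close> that by blast
    qed
    then have "mff_feasible V E FF (indicator M)"
      using mff_feasible_indicator_fort[OF g] M by (simp add: is_minimal_fort_def)
    then show False
      using infeasible by (auto simp: mff_is_feasible_def)
  qed
qed

theorem corollary6p3:
  fixes V :: "'a set" and E :: "'a \<Rightarrow> 'a \<Rightarrow> bool"
  assumes "simple_graph V E"
  shows "\<not> (\<exists>f :: nat \<Rightarrow> 'a set set. f 0 = {} \<and> (\<forall>n. mff_step V E (f n) (f (Suc n))))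
         \<and> (\<forall>FF. (mff_step V E)\<^sup>*\<^sup>* {} FF \<and> \<not> mff_is_feasible V E FF \<longrightarrow>
              FF = {F. is_minimal_fort V E F})"
proof (intro conjI allI impI notI)
  let ?M = "{F. is_minimal_fort V E F}"
  note step = mff_step_adds_minimal_fort[OF assms]
  assume "\<exists>f :: nat \<Rightarrow> 'a set set. f 0 = {} \<and> (\<forall>n. mff_step V E (f n) (f (Suc n)))"
  then obtain f :: "nat \<Rightarrow> 'a set set"
    where "f 0 = {}" and f_step: "\<forall>n. mff_step V E (f n) (f (Suc n))"
    by blast
  then have f_sub: "f n \<subseteq> ?M" for n
    by (induction n) (use step in blast)+
  then have "\<forall>n. f n \<subset> f (Suc n)"
    using step f_step by blast
  then show False
    using no_infinite_psubset_chain[OF finite_minimal_forts[OF assms]] f_sub by blast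
next
  fix FF
  assume FF: "(mff_step V E)\<^sup>*\<^sup>* {} FF \<and> \<not> mff_is_feasible V E FF"
  then have "(mff_step V E)\<^sup>*\<^sup>* {} FF"
    by blast
  then have "FF \<subseteq> {F. is_minimal_fort V E F}"
    by (induction rule: rtranclp_induct) (use mff_step_adds_minimal_fort[OF assms] in auto)
  then show "FF = {F. is_minimal_fort V E F}"
    using minimal_forts_subset_if_mff_infeasible[OF assms] FF by blast
qed

end
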